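(* Let $\mathbb T$ be an arbitrary parameter set and let $X=\{X(t),t\in\mathbb T\}$ be a centered Gaussian process such that $m(\mathbb T):=\sup_{t\in\mathbb T}\left(\mathbb E|X(t)|^2\right)^{1/2}<\infty$, the pseudometric space $(\mathbb T,\rho_X)$ is separable, and $X$ is separable on $(\mathbb T,\rho_X)$, where $\rho_X(t,s)=\left(\mathbb E(X(t)-X(s))^2\right)^{1/2}$. Let $r:[1,\infty)\to[0,\infty)$ be nondecreasing and such that $y\mapsto r(e^y)$, $y\ge0$, is convex. Put $I_r(x)=\int_0^x r(N(v))\,dv$ for $x>0$, and assume $I_r(m(\mathbb T))<\infty$. Then: (i) for any $\theta\in(0,1)$ and any $\lambda>0$, \[ \mathbb E\exp\Big\{\lambda\sup_{t\in\mathbb T}|X(t)|\Big\}\le 2\exp\Big\{\frac{\lambda^2m^2(\mathbb T)}{2(1-\theta)^2}\Big\}\, r^{(-1)}\Big(\frac{I_r(\theta m(\mathbb T))}{\theta m(\mathbb T)}\Big); \] (ii) for any $\theta\in(0,1)$ and any $\mu>0$, \[ \mathbb P\Big\{\sup_{t\in\mathbb T}|X(t)|\ge\mu\Big\}\le 2\exp\Big\{-\frac{\mu^2(1-\theta)^2}{2m^2(\mathbb T)}\Big\}\, r^{(-1)}\Big(\frac{I_r(\theta m(\mathbb T))}{\theta m(\mathbb T)}\Big). \]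
   Context: $N(u)$, $u>0$, denotes the metric massiveness of $(\mathbb T,\rho_X)$: the number of open balls in a minimal $u$-covering of $(\mathbb T,\rho_X)$. For the function $r$, $r^{(-1)}(t)=\sup\{u\ge0: r(u)\le t\}$ is its generalized inverse. *)

theory Defs
  imports "HOL-Probability.Probability"
begin

text \<open>A real random variable is centered Gaussian: either it vanishes almost surely
  (degenerate Gaussian with variance 0) or it has a normal distribution N(0, sigma^2), sigma > 0.\<close>
definition centered_gaussian_rv :: "'a measure \<Rightarrow> ('a \<Rightarrow> real) \<Rightarrow> bool" where
  "centered_gaussian_rv M Y \<longleftrightarrow> Y \<in> borel_measurable M \<and>
     ((AE \<omega> in M. Y \<omega> = 0) \<or> (\<exists>\<sigma>>0. distributed M lborel Y (normal_density 0 \<sigma>)))"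

definition centered_gaussian_process :: "'a measure \<Rightarrow> 't set \<Rightarrow> ('t \<Rightarrow> 'a \<Rightarrow> real) \<Rightarrow> bool" where
  "centered_gaussian_process M T X \<longleftrightarrow>
     (\<forall>F c. finite F \<longrightarrow> F \<subseteq> T \<longrightarrow> centered_gaussian_rv M (\<lambda>\<omega>. \<Sum>t\<in>F. c t * X t \<omega>))"

definition rho_X :: "'a measure \<Rightarrow> ('t \<Rightarrow> 'a \<Rightarrow> real) \<Rightarrow> 't \<Rightarrow> 't \<Rightarrow> real" where
  "rho_X M X t s = sqrt (\<integral>\<omega>. (X t \<omega> - X s \<omega>)\<^sup>2 \<partial>M)"

definition m_T :: "'a measure \<Rightarrow> 't set \<Rightarrow> ('t \<Rightarrow> 'a \<Rightarrow> real) \<Rightarrow> real" where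
  "m_T M T X = (SUP t\<in>T. sqrt (\<integral>\<omega>. (X t \<omega>)\<^sup>2 \<partial>M))"

definition separable_pm :: "'t set \<Rightarrow> ('t \<Rightarrow> 't \<Rightarrow> real) \<Rightarrow> bool" where
  "separable_pm T d \<longleftrightarrow> (\<exists>S\<subseteq>T. countable S \<and> (\<forall>t\<in>T. \<forall>\<epsilon>>0. \<exists>s\<in>S. d s t < \<epsilon>))"

definition separable_process ::
    "'a measure \<Rightarrow> 't set \<Rightarrow> ('t \<Rightarrow> 't \<Rightarrow> real) \<Rightarrow> ('t \<Rightarrow> 'a \<Rightarrow> real) \<Rightarrow> bool" where
  "separable_process M T d X \<longleftrightarrow>
     (\<exists>S\<subseteq>T. countable S \<and> (\<forall>t\<in>T. \<forall>\<epsilon>>0. \<exists>s\<in>S. d s t < \<epsilon>) \<and>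
       (\<exists>N\<in>null_sets M. \<forall>\<omega>\<in>space M - N. \<forall>t\<in>T. \<exists>s::nat \<Rightarrow> 't.
          (\<forall>n. s n \<in> S) \<and> (\<lambda>n. d (s n) t) \<longlonglongrightarrow> 0 \<and> (\<lambda>n. X (s n) \<omega>) \<longlonglongrightarrow> X t \<omega>))"

text \<open>Metric massiveness N(u): the least number of open balls of radius u (centres in T)
  covering T; \<infinity> if no finite covering exists.\<close>
definition covering_number :: "'t set \<Rightarrow> ('t \<Rightarrow> 't \<Rightarrow> real) \<Rightarrow> real \<Rightarrow> enat" where
  "covering_number T d u = (INF C\<in>{C. C \<subseteq> T \<and> finite C \<and> T \<subseteq> (\<Union>c\<in>C. {s\<in>T. d c s < u})}.
       enat (card C))"

definition I_r :: "(real \<Rightarrow> real) \<Rightarrow> 't set \<Rightarrow> ('t \<Rightarrow> 't \<Rightarrow> real) \<Rightarrow> real \<Rightarrow> ennreal" where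
  "I_r r T d x = (\<integral>\<^sup>+ v. indicator {0<..<x} v *
       (case covering_number T d v of enat n \<Rightarrow> ennreal (r (real n)) | \<infinity> \<Rightarrow> \<infinity>) \<partial>lborel)"

definition gen_inv :: "(real \<Rightarrow> real) \<Rightarrow> real \<Rightarrow> ennreal" where
  "gen_inv r t = (SUP u\<in>{u. 1 \<le> u \<and> r u \<le> t}. ennreal u)"

end

theory Submission
  imports Defs
begin

text \<open>Chain along the radii \<open>\<theta>^j m\<close>: fix minimal \<open>\<theta>^j m\<close>-nets and link every point of a finite
  \<open>F \<subseteq> T\<close> through successively coarser nets. Then \<open>X(s)\<close> is its value at the coarsest net plus a
  telescoping sum of increments, those of level \<open>i\<close> having standard deviation below \<open>\<theta>^i m\<close>.
  Giving level \<open>i\<close> the weight \<open>(1 - \<theta>) \<theta>^i\<close>, convexity of \<open>exp\<close> bounds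
  \<open>E exp(\<lambda> sup\<^sub>F |X|)\<close> by \<open>2 exp(\<lambda>\<^sup>2 m\<^sup>2 / (2 (1 - \<theta>)\<^sup>2))\<close> times the weighted geometric mean
  of the net sizes \<open>N(\<theta>^(i+1) m)\<close>. Jensen's inequality for the convex function \<open>y \<mapsto> r(e^y)\<close>
  bounds this mean by \<open>r^(-1)\<close> of a Riemann sum of \<open>\<integral>\<^sub>0^(\<theta>m) r(N(v)) dv\<close>, divided by \<open>\<theta>m\<close>.
  Separability of \<open>X\<close> passes from finite \<open>F\<close> to \<open>T\<close>, and (ii) follows from (i) by Markov's
  inequality with the optimal \<open>\<lambda>\<close>.\<close>

section \<open>Gaussian exponential moments\<close>

lemma normal_density_mgf:
  assumes "0 < (\<sigma>::real)"
  shows "(\<integral>\<^sup>+x. ennreal (normal_density 0 \<sigma> x * exp (c * x)) \<partial>lborel) = ennreal (exp (c\<^sup>2 * \<sigma>\<^sup>2 / 2))"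
proof -
  have shift: "normal_density 0 \<sigma> x * exp (c * x) = exp (c\<^sup>2 * \<sigma>\<^sup>2 / 2) * normal_density (c * \<sigma>\<^sup>2) \<sigma> x" for x
  proof -
    have "-(x - 0)\<^sup>2/ (2 * \<sigma>\<^sup>2) + c * x = c\<^sup>2 * \<sigma>\<^sup>2 / 2 + (-(x - c * \<sigma>\<^sup>2)\<^sup>2/ (2 * \<sigma>\<^sup>2))"
      using assms by (simp add: field_simps power2_eq_square)
    then show ?thesis unfolding normal_density_def
      by (simp add: exp_add[symmetric] mult_ac)
  qed
  have "(\<integral>\<^sup>+x. ennreal (normal_density 0 \<sigma> x * exp (c * x)) \<partial>lborel)
      = ennreal (exp (c\<^sup>2 * \<sigma>\<^sup>2 / 2)) * (\<integral>\<^sup>+x. ennreal (normal_density (c * \<sigma>\<^sup>2) \<sigma> x) \<partial>lborel)"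
    by (simp add: shift ennreal_mult nn_integral_cmult)
  also have "(\<integral>\<^sup>+x. ennreal (normal_density (c * \<sigma>\<^sup>2) \<sigma> x) \<partial>lborel) = 1"
    using prob_space.emeasure_space_1[OF prob_space_normal_density[OF assms, of "c * \<sigma>\<^sup>2"]]
    by (simp add: emeasure_density)
  finally show ?thesis by simp
qed

lemma centered_gaussian_rv_measurable: "centered_gaussian_rv M Y \<Longrightarrow> Y \<in> borel_measurable M"
  unfolding centered_gaussian_rv_def by auto

lemma centered_gaussian_mgf:
  assumes "prob_space M" and "centered_gaussian_rv M Y"
  shows "(\<integral>\<^sup>+\<omega>. ennreal (exp (c * Y \<omega>)) \<partial>M) = ennreal (exp (c\<^sup>2 * (\<integral>\<omega>. (Y \<omega>)\<^sup>2 \<partial>M) / 2))"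
proof -
  interpret prob_space M by fact
  have Y: "Y \<in> borel_measurable M"
    using assms(2) by (rule centered_gaussian_rv_measurable)
  from assms(2) consider "AE \<omega> in M. Y \<omega> = 0"
    | \<sigma> where "\<sigma> > 0" "distributed M lborel Y (normal_density 0 \<sigma>)"
    unfolding centered_gaussian_rv_def by auto
  then show ?thesis
  proof cases
    case 1
    have "(\<integral>\<^sup>+\<omega>. ennreal (exp (c * Y \<omega>)) \<partial>M) = (\<integral>\<^sup>+\<omega>. 1 \<partial>M)"
      by (rule nn_integral_cong_AE) (use 1 in auto)
    moreover have "(\<integral>\<omega>. (Y \<omega>)\<^sup>2 \<partial>M) = (\<integral>\<omega>. 0 \<partial>M)"
      by (rule integral_cong_AE) (use 1 Y in auto)
    ultimately show ?thesis by (simp add: emeasure_space_1)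
  next
    case 2
    have "(\<integral>\<^sup>+\<omega>. ennreal (exp (c * Y \<omega>)) \<partial>M)
        = (\<integral>\<^sup>+x. ennreal (normal_density 0 \<sigma> x) * ennreal (exp (c * x)) \<partial>lborel)"
      by (rule distributed_nn_integral[OF 2(2), symmetric]) simp
    also have "\<dots> = ennreal (exp (c\<^sup>2 * \<sigma>\<^sup>2 / 2))"
      using normal_density_mgf[OF 2(1), of c] by (simp add: ennreal_mult)
    moreover have "(\<integral>\<omega>. (Y \<omega>)\<^sup>2 \<partial>M) = \<sigma>\<^sup>2"
      using normal_distributed_variance[OF 2] normal_distributed_expectation[OF 2] by simp
    ultimately show ?thesis by simp
  qed
qed

lemma centered_gaussian_mgf_le:
  assumes "prob_space M" "centered_gaussian_rv M Y" "(\<integral>\<omega>. (Y \<omega>)\<^sup>2 \<partial>M) \<le> v"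
  shows "(\<integral>\<^sup>+\<omega>. ennreal (exp (c * Y \<omega>)) \<partial>M) \<le> ennreal (exp (c\<^sup>2 * v / 2))"
  unfolding centered_gaussian_mgf[OF assms(1,2)]
  using assms(3) by (intro ennreal_leI) (auto intro!: mult_left_mono)

lemma nn_integral_sum_exp_gaussians_le:
  assumes "prob_space M" and "finite V"
    and G: "\<And>Y. Y \<in> V \<Longrightarrow> centered_gaussian_rv M Y \<and> (\<integral>\<omega>. (Y \<omega>)\<^sup>2 \<partial>M) \<le> v"
  shows "(\<integral>\<^sup>+\<omega>. ennreal (\<Sum>Y\<in>V. exp (\<mu> * Y \<omega>) + exp (- \<mu> * Y \<omega>)) \<partial>M)
     \<le> ennreal (2 * real (card V) * exp (\<mu>\<^sup>2 * v / 2))"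
proof -
  have meas: "Y \<in> borel_measurable M" if "Y \<in> V" for Y
    using G[OF that] centered_gaussian_rv_measurable by blast
  have "(\<integral>\<^sup>+\<omega>. ennreal (\<Sum>Y\<in>V. exp (\<mu> * Y \<omega>) + exp (- \<mu> * Y \<omega>)) \<partial>M)
      = (\<Sum>Y\<in>V. (\<integral>\<^sup>+\<omega>. ennreal (exp (\<mu> * Y \<omega>)) \<partial>M) + (\<integral>\<^sup>+\<omega>. ennreal (exp (- \<mu> * Y \<omega>)) \<partial>M))"
    using meas
    by (simp add: sum_ennreal[symmetric] ennreal_plus nn_integral_sum nn_integral_add
        del: sum_ennreal)
  also have "\<dots> \<le> (\<Sum>Y\<in>V. ennreal (exp (\<mu>\<^sup>2 * v / 2)) + ennreal (exp ((- \<mu>)\<^sup>2 * v / 2)))"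
    using G by (intro sum_mono add_mono centered_gaussian_mgf_le[OF assms(1)]) auto
  also have "\<dots> = ennreal (2 * real (card V) * exp (\<mu>\<^sup>2 * v / 2))"
    by (simp add: ennreal_plus[symmetric] ennreal_mult[symmetric] ennreal_of_nat_eq_real_of_nat
        mult_ac del: ennreal_plus)
  finally show ?thesis .
qed


lemma exp_sum_le_weighted:
  fixes a c x :: "'i \<Rightarrow> real"
  assumes "finite I" "I \<noteq> {}" and a: "\<And>i. i \<in> I \<Longrightarrow> 0 < a i" and "(\<Sum>i\<in>I. a i) = 1"
    and c: "\<And>i. i \<in> I \<Longrightarrow> 0 < c i"
  shows "exp (\<Sum>i\<in>I. x i) \<le> exp (\<Sum>i\<in>I. a i * ln (c i)) * (\<Sum>i\<in>I. a i / c i * exp (x i / a i))"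
proof -
  define u where "u i = x i / a i - ln (c i)" for i
  have "a i * u i = x i - a i * ln (c i)" if "i \<in> I" for i
    using a[OF that] unfolding u_def by (simp add: field_simps)
  then have "(\<Sum>i\<in>I. a i * u i) = (\<Sum>i\<in>I. x i) - (\<Sum>i\<in>I. a i * ln (c i))"
    by (simp add: sum_subtractf[symmetric])
  then have "exp (\<Sum>i\<in>I. x i) = exp (\<Sum>i\<in>I. a i * ln (c i)) * exp (\<Sum>i\<in>I. a i * u i)"
    by (simp add: exp_add[symmetric])
  also have "exp (\<Sum>i\<in>I. a i * u i) \<le> (\<Sum>i\<in>I. a i * exp (u i))"
    using convex_on_sum[OF assms(1,2) exp_convex assms(4), of u] a by (auto simp: less_imp_le)
  also have "(\<Sum>i\<in>I. a i * exp (u i)) = (\<Sum>i\<in>I. a i / c i * exp (x i / a i))"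
    by (rule sum.cong) (use c in \<open>auto simp: u_def exp_diff\<close>)
  finally show ?thesis by simp
qed

lemma exp_mult_abs_le: "0 \<le> (\<mu>::real) \<Longrightarrow> exp (\<mu> * \<bar>y\<bar>) \<le> exp (\<mu> * y) + exp (- \<mu> * y)"
  by (cases "y \<ge> 0") auto

lemma exp_sum_Max_abs_le_weighted:
  fixes V :: "'i \<Rightarrow> ('a \<Rightarrow> real) set"
  assumes "finite I" "I \<noteq> {}" and a: "\<And>i. i \<in> I \<Longrightarrow> 0 < a i" and "(\<Sum>i\<in>I. a i) = 1"
    and c: "\<And>i. i \<in> I \<Longrightarrow> 0 < c i" and V: "\<And>i. i \<in> I \<Longrightarrow> finite (V i) \<and> V i \<noteq> {}"
    and lam: "0 \<le> lam"
  shows "exp (lam * (\<Sum>i\<in>I. Max ((\<lambda>Y. \<bar>Y \<omega>\<bar>) ` V i)))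
    \<le> exp (\<Sum>i\<in>I. a i * ln (c i))
      * (\<Sum>i\<in>I. a i / c i * (\<Sum>Y\<in>V i. exp (lam / a i * Y \<omega>) + exp (- (lam / a i) * Y \<omega>)))"
proof -
  define W where "W i = (\<Sum>Y\<in>V i. exp (lam / a i * Y \<omega>) + exp (- (lam / a i) * Y \<omega>))" for i
  have Max_le_W: "exp (lam * Max ((\<lambda>Y. \<bar>Y \<omega>\<bar>) ` V i) / a i) \<le> W i" if i: "i \<in> I" for i
  proof -
    have "Max ((\<lambda>Y. \<bar>Y \<omega>\<bar>) ` V i) \<in> (\<lambda>Y. \<bar>Y \<omega>\<bar>) ` V i"
      by (rule Max_in) (use V[OF i] in auto)
    then obtain Y where Y: "Y \<in> V i" "Max ((\<lambda>Y. \<bar>Y \<omega>\<bar>) ` V i) = \<bar>Y \<omega>\<bar>"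
      by auto
    have "exp (lam * \<bar>Y \<omega>\<bar> / a i) \<le> exp (lam / a i * Y \<omega>) + exp (- (lam / a i) * Y \<omega>)"
      using exp_mult_abs_le[of "lam / a i" "Y \<omega>"] lam a[OF i] by simp
    also have "\<dots> \<le> W i"
      unfolding W_def
      by (rule member_le_sum[where f="\<lambda>Y. exp (lam / a i * Y \<omega>) + exp (- (lam / a i) * Y \<omega>)"])
        (use Y V[OF i] in auto)
    finally show ?thesis using Y(2) by simp
  qed
  have "exp (lam * (\<Sum>i\<in>I. Max ((\<lambda>Y. \<bar>Y \<omega>\<bar>) ` V i)))
      = exp (\<Sum>i\<in>I. lam * Max ((\<lambda>Y. \<bar>Y \<omega>\<bar>) ` V i))"
    by (simp add: sum_distrib_left)
  also have "\<dots> \<le> exp (\<Sum>i\<in>I. a i * ln (c i))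
      * (\<Sum>i\<in>I. a i / c i * exp (lam * Max ((\<lambda>Y. \<bar>Y \<omega>\<bar>) ` V i) / a i))"
    by (rule exp_sum_le_weighted[OF assms(1-4) c])
  also have "\<dots> \<le> exp (\<Sum>i\<in>I. a i * ln (c i)) * (\<Sum>i\<in>I. a i / c i * W i)"
    using a c Max_le_W by (intro mult_left_mono sum_mono) (auto simp: less_imp_le)
  finally show ?thesis unfolding W_def .
qed

text \<open>The weights trade variance against exponent: family \<open>i\<close> is integrated with exponent
  \<open>lam / a i\<close>, so each family contributes the same Gaussian factor \<open>exp (lam\<^sup>2 s\<^sup>2 / 2)\<close>.\<close>
lemma nn_integral_exp_sum_Max_gaussians_le:
  assumes P: "prob_space M" and "finite I" "I \<noteq> {}"
    and a: "\<And>i. i \<in> I \<Longrightarrow> a i > 0" and sum_a: "(\<Sum>i\<in>I. a i) = 1"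
    and V: "\<And>i. i \<in> I \<Longrightarrow> finite (V i) \<and> V i \<noteq> {}"
    and G: "\<And>i Y. i \<in> I \<Longrightarrow> Y \<in> V i \<Longrightarrow>
              centered_gaussian_rv M Y \<and> (\<integral>\<omega>. (Y \<omega>)\<^sup>2 \<partial>M) \<le> (a i * s)\<^sup>2"
    and lam: "lam \<ge> 0"
    and g: "\<And>\<omega>. \<omega> \<in> space M \<Longrightarrow> g \<omega> \<le> ennreal (exp (lam * (\<Sum>i\<in>I. Max ((\<lambda>Y. \<bar>Y \<omega>\<bar>) ` V i))))"
  shows "(\<integral>\<^sup>+\<omega>. g \<omega> \<partial>M)
    \<le> ennreal (2 * exp (lam\<^sup>2 * s\<^sup>2 / 2) * exp (\<Sum>i\<in>I. a i * ln (card (V i))))"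
proof -
  define E where "E = exp (lam\<^sup>2 * s\<^sup>2 / 2)"
  define c where "c i = 2 * real (card (V i)) * E" for i
  define K where "K = exp (\<Sum>i\<in>I. a i * ln (c i))"
  define W where "W i \<omega> = (\<Sum>Y\<in>V i. exp (lam / a i * Y \<omega>) + exp (- (lam / a i) * Y \<omega>))" for i \<omega>
  have card_pos: "i \<in> I \<Longrightarrow> real (card (V i)) > 0" for i
    using V[of i] by (simp add: card_gt_0_iff)
  have c_pos: "i \<in> I \<Longrightarrow> c i > 0" for i
    using card_pos[of i] unfolding c_def E_def by simp
  have "a i * ln (c i) = a i * (ln 2 + lam\<^sup>2 * s\<^sup>2 / 2) + a i * ln (card (V i))" if "i \<in> I" for i
    using card_pos[OF that] by (simp add: c_def E_def ln_mult algebra_simps)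
  then have "(\<Sum>i\<in>I. a i * ln (c i))
      = (\<Sum>i\<in>I. a i) * (ln 2 + lam\<^sup>2 * s\<^sup>2 / 2) + (\<Sum>i\<in>I. a i * ln (card (V i)))"
    by (simp add: sum.distrib sum_distrib_right)
  then have K: "K = 2 * E * exp (\<Sum>i\<in>I. a i * ln (card (V i)))"
    unfolding K_def E_def sum_a by (simp add: exp_add)
  have W_meas: "i \<in> I \<Longrightarrow> W i \<in> borel_measurable M" for i
  proof -
    assume i: "i \<in> I"
    have [measurable]: "Y \<in> borel_measurable M" if "Y \<in> V i" for Y
      using G[OF i that] centered_gaussian_rv_measurable by blast
    show ?thesis
      unfolding W_def by (rule borel_measurable_sum) measurable
  qed
  have W_nonneg: "0 \<le> W i \<omega>" for i \<omega>
    unfolding W_def by (intro sum_nonneg) auto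
  have pointwise: "g \<omega> \<le> ennreal K * (\<Sum>i\<in>I. ennreal (a i / c i) * ennreal (W i \<omega>))"
    if "\<omega> \<in> space M" for \<omega>
  proof -
    have "g \<omega> \<le> ennreal (K * (\<Sum>i\<in>I. a i / c i * W i \<omega>))"
      using g[OF that] exp_sum_Max_abs_le_weighted[OF assms(2,3) a sum_a c_pos V lam, where \<omega>=\<omega>]
      unfolding K_def W_def by (meson ennreal_leI order_trans)
    also have "\<dots> = ennreal K * (\<Sum>i\<in>I. ennreal (a i / c i * W i \<omega>))"
      using a c_pos W_nonneg unfolding K_def
      by (simp add: ennreal_mult' sum_nonneg less_imp_le)
    also have "(\<Sum>i\<in>I. ennreal (a i / c i * W i \<omega>)) = (\<Sum>i\<in>I. ennreal (a i / c i) * ennreal (W i \<omega>))"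
      using a c_pos W_nonneg by (intro sum.cong refl ennreal_mult) (auto simp: less_imp_le)
    finally show ?thesis .
  qed
  have "(\<integral>\<^sup>+\<omega>. g \<omega> \<partial>M) \<le> (\<integral>\<^sup>+\<omega>. ennreal K * (\<Sum>i\<in>I. ennreal (a i / c i) * ennreal (W i \<omega>)) \<partial>M)"
    by (rule nn_integral_mono) (rule pointwise)
  also have "\<dots> = ennreal K * (\<Sum>i\<in>I. ennreal (a i / c i) * (\<integral>\<^sup>+\<omega>. ennreal (W i \<omega>) \<partial>M))"
    using W_meas by (simp add: nn_integral_cmult nn_integral_sum)
  also have "\<dots> \<le> ennreal K * (\<Sum>i\<in>I. ennreal (a i / c i) * ennreal (c i))"
  proof (intro mult_left_mono sum_mono)
    fix i assume i: "i \<in> I"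
    have "(\<integral>\<^sup>+\<omega>. ennreal (W i \<omega>) \<partial>M)
        \<le> ennreal (2 * real (card (V i)) * exp ((lam / a i)\<^sup>2 * (a i * s)\<^sup>2 / 2))"
      unfolding W_def by (rule nn_integral_sum_exp_gaussians_le[OF P]) (use V G i in auto)
    also have "(lam / a i)\<^sup>2 * (a i * s)\<^sup>2 = lam\<^sup>2 * s\<^sup>2"
      using a[OF i] by (simp add: field_simps power2_eq_square)
    finally show "(\<integral>\<^sup>+\<omega>. ennreal (W i \<omega>) \<partial>M) \<le> ennreal (c i)"
      unfolding c_def E_def by simp
  qed auto
  also have "(\<Sum>i\<in>I. ennreal (a i / c i) * ennreal (c i)) = ennreal (\<Sum>i\<in>I. a i)"
  proof -
    have "ennreal (a i / c i) * ennreal (c i) = ennreal (a i)" if "i \<in> I" for i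
      using a[OF that] c_pos[OF that] by (simp add: ennreal_mult[symmetric])
    then show ?thesis
      using a by (simp add: less_imp_le)
  qed
  finally show ?thesis
    using sum_a by (simp add: K E_def)
qed


section \<open>Covering numbers and the entropy integral\<close>

lemma covering_number_antimono:
  assumes "v \<le> w"
  shows "covering_number T d w \<le> covering_number T d v"
  unfolding covering_number_def
proof (rule INF_superset_mono)
  show "{C. C \<subseteq> T \<and> finite C \<and> T \<subseteq> (\<Union>c\<in>C. {s\<in>T. d c s < v})}
     \<subseteq> {C. C \<subseteq> T \<and> finite C \<and> T \<subseteq> (\<Union>c\<in>C. {s\<in>T. d c s < w})}"
  proof safe
    fix C x assume "T \<subseteq> (\<Union>c\<in>C. {s\<in>T. d c s < v})" "x \<in> T"
    then obtain c where "c \<in> C" "d c x < v" by blast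
    then show "x \<in> (\<Union>c\<in>C. {s\<in>T. d c s < w})" using assms \<open>x \<in> T\<close> by force
  qed
qed simp

lemma covering_number_ge_1:
  assumes "T \<noteq> {}"
  shows "1 \<le> covering_number T d v"
  unfolding covering_number_def
proof (rule INF_greatest)
  fix C assume C: "C \<in> {C. C \<subseteq> T \<and> finite C \<and> T \<subseteq> (\<Union>c\<in>C. {s\<in>T. d c s < v})}"
  then have "C \<noteq> {}" using assms by auto
  then show "1 \<le> enat (card C)" using C by (simp add: one_enat_def card_gt_0_iff Suc_le_eq)
qed

lemma covering_number_attained:
  assumes "covering_number T d v = enat n"
  obtains C where "C \<subseteq> T" "finite C" "T \<subseteq> (\<Union>c\<in>C. {s\<in>T. d c s < v})" "card C = n"
proof -
  let ?S = "{C. C \<subseteq> T \<and> finite C \<and> T \<subseteq> (\<Union>c\<in>C. {s\<in>T. d c s < v})}"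
  have "(\<lambda>C. enat (card C)) ` ?S \<noteq> {}"
  proof
    assume "(\<lambda>C. enat (card C)) ` ?S = {}"
    then have "covering_number T d v = \<infinity>"
      unfolding covering_number_def by (simp only: Inf_empty top_enat_def)
    then show False using assms by simp
  qed
  then obtain k where "k \<in> (\<lambda>C. enat (card C)) ` ?S" by blast
  then have "covering_number T d v \<in> (\<lambda>C. enat (card C)) ` ?S"
    unfolding covering_number_def by (rule wellorder_InfI)
  then show ?thesis using assms that by auto
qed

definition r_covering :: "(real \<Rightarrow> real) \<Rightarrow> 't set \<Rightarrow> ('t \<Rightarrow> 't \<Rightarrow> real) \<Rightarrow> real \<Rightarrow> ennreal" where
  "r_covering r T d v =
     (case covering_number T d v of enat n \<Rightarrow> ennreal (r (real n)) | \<infinity> \<Rightarrow> \<infinity>)"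

lemma I_r_eq: "I_r r T d x = (\<integral>\<^sup>+ v. indicator {0<..<x} v * r_covering r T d v \<partial>lborel)"
  unfolding I_r_def r_covering_def ..

lemma I_r_mono: "x \<le> y \<Longrightarrow> I_r r T d x \<le> I_r r T d y"
  unfolding I_r_eq by (intro nn_integral_mono mult_right_mono) (auto split: split_indicator)

lemma covering_number_finite_if_I_r_finite:
  assumes "I_r r T d x < \<infinity>" "0 < v" "v < x"
  shows "covering_number T d v \<noteq> \<infinity>"
proof
  assume inf: "covering_number T d v = \<infinity>"
  have "(\<integral>\<^sup>+ w. \<infinity> * indicator {0<..<v} w \<partial>lborel) \<le> I_r r T d x"
    unfolding I_r_eq
  proof (rule nn_integral_mono)
    fix w :: real
    show "\<infinity> * indicator {0<..<v} w \<le> indicator {0<..<x} w * r_covering r T d w"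
    proof (cases "w \<in> {0<..<v}")
      case True
      then have "covering_number T d w = \<infinity>"
        using covering_number_antimono[of w v T d] inf by (simp add: top_enat_def[symmetric] top_unique)
      then show ?thesis using True assms by (simp add: r_covering_def)
    qed simp
  qed
  also have "(\<integral>\<^sup>+ w. \<infinity> * indicator {0<..<v} w \<partial>lborel) = \<infinity>"
    using assms by (subst nn_integral_cmult_indicator) (auto simp: ennreal_top_mult)
  finally show False using assms(1) by simp
qed

lemma r_covering_ge:
  assumes "mono_on {1..} r" "1 \<le> n" "enat n \<le> covering_number T d v"
  shows "ennreal (r (real n)) \<le> r_covering r T d v"
proof (cases "covering_number T d v")
  case (enat k)
  then have "r n \<le> r (real k)"
    using assms by (intro mono_onD[OF assms(1)]) auto
  then show ?thesis using enat by (simp add: r_covering_def ennreal_leI)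
qed (simp add: r_covering_def)

lemma gen_inv_ge: "1 \<le> u \<Longrightarrow> r u \<le> t \<Longrightarrow> ennreal u \<le> gen_inv r t"
  unfolding gen_inv_def by (rule SUP_upper) auto

section \<open>Separability and Markov's inequality\<close>

lemma separable_process_AE_SUP_eq:
  fixes X :: "'t \<Rightarrow> 'a \<Rightarrow> real" and \<phi> :: "real \<Rightarrow> ennreal"
  assumes "separable_process M T d X" "T \<noteq> {}" "\<And>x. isCont \<phi> x"
  obtains S where "S \<subseteq> T" "countable S" "S \<noteq> {}"
    "AE \<omega> in M. (SUP t\<in>T. \<phi> (X t \<omega>)) = (SUP t\<in>S. \<phi> (X t \<omega>))"
proof -
  obtain S N where S: "S \<subseteq> T" "countable S" "\<forall>t\<in>T. \<forall>\<epsilon>>0. \<exists>s\<in>S. d s t < \<epsilon>"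
    and N: "N \<in> null_sets M"
    and conv: "\<forall>\<omega>\<in>space M - N. \<forall>t\<in>T. \<exists>s::nat \<Rightarrow> 't.
          (\<forall>n. s n \<in> S) \<and> (\<lambda>n. d (s n) t) \<longlonglongrightarrow> 0 \<and> (\<lambda>n. X (s n) \<omega>) \<longlonglongrightarrow> X t \<omega>"
    using assms(1) unfolding separable_process_def by blast
  have "S \<noteq> {}"
  proof -
    obtain t where "t \<in> T" using assms(2) by blast
    then obtain s where "s \<in> S" using S(3) zero_less_one by blast
    then show ?thesis by blast
  qed
  moreover have "AE \<omega> in M. (SUP t\<in>T. \<phi> (X t \<omega>)) = (SUP t\<in>S. \<phi> (X t \<omega>))"
  proof (rule AE_I'[OF N], rule subsetI, rule ccontr)
    fix \<omega> assume \<omega>: "\<omega> \<in> {\<omega> \<in> space M. (SUP t\<in>T. \<phi> (X t \<omega>)) \<noteq> (SUP t\<in>S. \<phi> (X t \<omega>))}"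
      and "\<omega> \<notin> N"
    have "\<phi> (X t \<omega>) \<le> (SUP s\<in>S. \<phi> (X s \<omega>))" if t: "t \<in> T" for t
    proof -
      obtain s where s: "\<forall>n. s n \<in> S" "(\<lambda>n. X (s n) \<omega>) \<longlonglongrightarrow> X t \<omega>"
        using conv \<omega> \<open>\<omega> \<notin> N\<close> t by blast
      have "(\<lambda>n. \<phi> (X (s n) \<omega>)) \<longlonglongrightarrow> \<phi> (X t \<omega>)"
        by (rule isCont_tendsto_compose[OF assms(3) s(2)])
      then show ?thesis
        by (rule LIMSEQ_le_const2) (use s(1) in \<open>auto intro!: SUP_upper\<close>)
    qed
    then have "(SUP t\<in>T. \<phi> (X t \<omega>)) \<le> (SUP t\<in>S. \<phi> (X t \<omega>))"
      by (rule SUP_least)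
    moreover have "(SUP t\<in>S. \<phi> (X t \<omega>)) \<le> (SUP t\<in>T. \<phi> (X t \<omega>))"
      using S(1) by (rule SUP_subset_mono) simp
    ultimately show False using \<omega> by simp
  qed
  ultimately show ?thesis using S that by blast
qed

lemma nn_integral_SUP_countable_le:
  fixes h :: "'t \<Rightarrow> 'a \<Rightarrow> ennreal"
  assumes "countable S" "S \<noteq> {}" "\<And>t. t \<in> S \<Longrightarrow> h t \<in> borel_measurable M"
    and finite_le: "\<And>F. finite F \<Longrightarrow> F \<noteq> {} \<Longrightarrow> F \<subseteq> S \<Longrightarrow> (\<integral>\<^sup>+\<omega>. (SUP t\<in>F. h t \<omega>) \<partial>M) \<le> B"
  shows "(\<integral>\<^sup>+\<omega>. (SUP t\<in>S. h t \<omega>) \<partial>M) \<le> B"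
proof -
  define F where "F k = from_nat_into S ` {..k}" for k :: nat
  have F_sub: "F k \<subseteq> S" for k
    unfolding F_def using from_nat_into[OF assms(2)] by auto
  have "S = (\<Union>k. F k)"
  proof
    show "S \<subseteq> (\<Union>k. F k)"
    proof
      fix s assume "s \<in> S"
      then obtain k where "s = from_nat_into S k"
        using range_from_nat_into[OF assms(2,1)] by (metis imageE)
      then show "s \<in> (\<Union>k. F k)" unfolding F_def by auto
    qed
  qed (use F_sub in auto)
  then have "(\<integral>\<^sup>+\<omega>. (SUP t\<in>S. h t \<omega>) \<partial>M) = (\<integral>\<^sup>+\<omega>. (SUP k. SUP t\<in>F k. h t \<omega>) \<partial>M)"
    by (simp add: SUP_UNION)
  also have "\<dots> = (SUP k. \<integral>\<^sup>+\<omega>. (SUP t\<in>F k. h t \<omega>) \<partial>M)"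
  proof (rule nn_integral_monotone_convergence_SUP)
    show "incseq (\<lambda>k \<omega>. SUP t\<in>F k. h t \<omega>)"
      by (intro monoI le_funI SUP_subset_mono) (auto simp: F_def)
    show "(\<lambda>\<omega>. SUP t\<in>F k. h t \<omega>) \<in> borel_measurable M" for k
      by (rule borel_measurable_SUP) (use F_sub assms(3) in \<open>auto simp: F_def\<close>)
  qed
  also have "\<dots> \<le> B"
    using F_sub by (intro SUP_least finite_le) (auto simp: F_def)
  finally show ?thesis .
qed

lemma ennreal_exp_le_SUP:
  fixes f :: "'t \<Rightarrow> real"
  assumes lam: "lam > 0" and ge: "ereal \<mu> \<le> (SUP t\<in>T. ereal \<bar>f t\<bar>)"
  shows "ennreal (exp (lam * \<mu>)) \<le> (SUP t\<in>T. ennreal (exp (lam * \<bar>f t\<bar>)))"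
proof -
  have approx: "ennreal (exp (lam * (\<mu> - 1 / Suc k))) \<le> (SUP t\<in>T. ennreal (exp (lam * \<bar>f t\<bar>)))"
    for k :: nat
  proof -
    have "ereal (\<mu> - 1 / Suc k) < (SUP t\<in>T. ereal \<bar>f t\<bar>)"
      using ge by (rule less_le_trans[rotated]) simp
    then obtain t where t: "t \<in> T" "\<mu> - 1 / Suc k < \<bar>f t\<bar>"
      by (auto simp: less_SUP_iff)
    then have "ennreal (exp (lam * (\<mu> - 1 / Suc k))) \<le> ennreal (exp (lam * \<bar>f t\<bar>))"
      using lam by (intro ennreal_leI) simp
    also have "\<dots> \<le> (SUP t\<in>T. ennreal (exp (lam * \<bar>f t\<bar>)))"
      using t(1) by (rule SUP_upper)
    finally show ?thesis .
  qed
  have "(\<lambda>k. ennreal (exp (lam * (\<mu> - 1 / real (Suc k))))) \<longlonglongrightarrow> ennreal (exp (lam * (\<mu> - 0)))"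
    by (intro tendsto_intros LIMSEQ_inverse_real_of_nat[unfolded inverse_eq_divide])
  then have "ennreal (exp (lam * (\<mu> - 0))) \<le> (SUP t\<in>T. ennreal (exp (lam * \<bar>f t\<bar>)))"
    by (rule LIMSEQ_le_const2) (use approx in blast)
  then show ?thesis by simp
qed

text \<open>No measurability of the supremum is needed: a non-measurable level set has measure \<open>0\<close> by
  convention.\<close>
lemma emeasure_SUP_ge_le_nn_integral_exp:
  fixes f :: "'t \<Rightarrow> 'a \<Rightarrow> real"
  assumes "lam > 0"
  shows "ennreal (exp (lam * \<mu>)) * emeasure N {\<omega>\<in>space N. ereal \<mu> \<le> (SUP t\<in>T. ereal \<bar>f t \<omega>\<bar>)}
    \<le> (\<integral>\<^sup>+\<omega>. (SUP t\<in>T. ennreal (exp (lam * \<bar>f t \<omega>\<bar>))) \<partial>N)"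
proof (cases "{\<omega>\<in>space N. ereal \<mu> \<le> (SUP t\<in>T. ereal \<bar>f t \<omega>\<bar>)} \<in> sets N")
  case True
  then have "ennreal (exp (lam * \<mu>)) * emeasure N {\<omega>\<in>space N. ereal \<mu> \<le> (SUP t\<in>T. ereal \<bar>f t \<omega>\<bar>)}
    = (\<integral>\<^sup>+\<omega>. ennreal (exp (lam * \<mu>)) * indicator {\<omega>\<in>space N. ereal \<mu> \<le> (SUP t\<in>T. ereal \<bar>f t \<omega>\<bar>)} \<omega> \<partial>N)"
    by (simp add: nn_integral_cmult_indicator)
  also have "\<dots> \<le> (\<integral>\<^sup>+\<omega>. (SUP t\<in>T. ennreal (exp (lam * \<bar>f t \<omega>\<bar>))) \<partial>N)"
    using ennreal_exp_le_SUP[OF assms] by (intro nn_integral_mono) (auto split: split_indicator)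
  finally show ?thesis .
qed (simp add: emeasure_notin_sets)


section \<open>Chaining\<close>

lemma sum_geometric_weights: "(\<Sum>i\<le>K. (1 - \<theta>) * \<theta> ^ i) = 1 - (\<theta>::'a::comm_ring_1) ^ Suc K"
  by (induction K) (auto simp: algebra_simps)

primrec compose_from :: "(nat \<Rightarrow> 't \<Rightarrow> 't) \<Rightarrow> nat \<Rightarrow> nat \<Rightarrow> 't \<Rightarrow> 't" where
  "compose_from g j 0 t = g j t"
| "compose_from g j (Suc k) t = g j (compose_from g (Suc j) k t)"

locale gaussian_chaining =
  fixes M :: "'a measure" and T :: "'t set" and X :: "'t \<Rightarrow> 'a \<Rightarrow> real"
    and r :: "real \<Rightarrow> real" and \<theta> :: real
  assumes prob: "prob_space M"
    and T_ne: "T \<noteq> {}"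
    and gaussian: "centered_gaussian_process M T X"
    and bdd: "bdd_above ((\<lambda>t. sqrt (\<integral>\<omega>. (X t \<omega>)\<^sup>2 \<partial>M)) ` T)"
    and m_pos: "m_T M T X > 0"
    and separable: "separable_process M T (rho_X M X) X"
    and r_nonneg: "\<forall>u\<ge>1. r u \<ge> 0"
    and r_mono: "mono_on {1..} r"
    and r_exp_convex: "convex_on {0..} (\<lambda>y. r (exp y))"
    and I_r_finite: "I_r r T (rho_X M X) (m_T M T X) < \<infinity>"
    and theta_pos: "0 < \<theta>" and theta_less_1: "\<theta> < 1"
begin

abbreviation "d \<equiv> rho_X M X"
abbreviation "m \<equiv> m_T M T X"

lemma centered_gaussian_linear_combination:
  "finite F \<Longrightarrow> F \<subseteq> T \<Longrightarrow> centered_gaussian_rv M (\<lambda>\<omega>. \<Sum>t\<in>F. c t * X t \<omega>)"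
  using gaussian unfolding centered_gaussian_process_def by blast

lemma centered_gaussian_X: "u \<in> T \<Longrightarrow> centered_gaussian_rv M (X u)"
  using centered_gaussian_linear_combination[of "{u}" "\<lambda>_. 1"] by simp

lemma centered_gaussian_X_diff:
  assumes "u \<in> T" "w \<in> T"
  shows "centered_gaussian_rv M (\<lambda>\<omega>. X u \<omega> - X w \<omega>)"
proof (cases "u = w")
  case True
  then show ?thesis
    using centered_gaussian_linear_combination[of "{u}" "\<lambda>_. 0"] assms by simp
next
  case False
  then show ?thesis
    using centered_gaussian_linear_combination[of "{u, w}" "\<lambda>t. if t = u then 1 else -1"] assms
    by simp
qed

lemma second_moment_le: "u \<in> T \<Longrightarrow> (\<integral>\<omega>. (X u \<omega>)\<^sup>2 \<partial>M) \<le> m\<^sup>2"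
proof -
  assume u: "u \<in> T"
  have "sqrt (\<integral>\<omega>. (X u \<omega>)\<^sup>2 \<partial>M) \<le> m"
    unfolding m_T_def by (rule cSUP_upper[OF u bdd])
  then have "(sqrt (\<integral>\<omega>. (X u \<omega>)\<^sup>2 \<partial>M))\<^sup>2 \<le> m\<^sup>2"
    by (intro power_mono) auto
  then show ?thesis by simp
qed

lemma second_moment_diff_le: "d u w < e \<Longrightarrow> (\<integral>\<omega>. (X u \<omega> - X w \<omega>)\<^sup>2 \<partial>M) \<le> e\<^sup>2"
proof -
  assume "d u w < e"
  then have "(d u w)\<^sup>2 \<le> e\<^sup>2"
    by (intro power_mono) (auto simp: rho_X_def)
  then show ?thesis by (simp add: rho_X_def)
qed

definition radius :: "nat \<Rightarrow> real" where "radius j = \<theta> ^ j * m"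

definition net_size :: "nat \<Rightarrow> nat" where "net_size j = the_enat (covering_number T d (radius j))"

lemma radius_pos: "radius j > 0"
  unfolding radius_def using theta_pos m_pos by simp

lemma radius_antimono: "j \<le> k \<Longrightarrow> radius k \<le> radius j"
  unfolding radius_def using theta_pos theta_less_1 m_pos
  by (intro mult_right_mono power_decreasing) auto

lemma radius_less_m: "1 \<le> j \<Longrightarrow> radius j < m"
  unfolding radius_def using theta_pos theta_less_1 m_pos
  by (simp add: power_less_one_iff)

lemma covering_number_radius: "1 \<le> j \<Longrightarrow> covering_number T d (radius j) = enat (net_size j)"
  using covering_number_finite_if_I_r_finite[OF I_r_finite radius_pos radius_less_m, of j]
  unfolding net_size_def by (cases "covering_number T d (radius j)") auto

lemma net_size_ge_1: "1 \<le> j \<Longrightarrow> 1 \<le> net_size j"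
  using covering_number_ge_1[OF T_ne, of d "radius j"] covering_number_radius[of j]
  by (simp add: one_enat_def)

lemma r_net_size_nonneg: "1 \<le> j \<Longrightarrow> 0 \<le> r (real (net_size j))"
  using r_nonneg net_size_ge_1[of j] by auto

text \<open>The step function under \<open>v \<mapsto> r(N(v))\<close>: on \<open>[radius (i+2), radius (i+1))\<close> the covering
  number is at least \<open>net_size (i+1)\<close>, and below \<open>radius (K+2)\<close> it is at least \<open>1\<close>.\<close>
lemma step_function_le_r_covering:
  "(\<Sum>i\<le>K. ennreal (r (net_size (Suc i))) * indicator {radius (Suc (Suc i))..<radius (Suc i)} v)
     + ennreal (r 1) * indicator {0<..<radius (Suc (Suc K))} v
   \<le> indicator {0<..<radius 1} v * r_covering r T d v"
proof (cases "\<exists>i\<le>K. v \<in> {radius (Suc (Suc i))..<radius (Suc i)}")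
  case True
  then obtain i where i: "i \<le> K" "v \<in> {radius (Suc (Suc i))..<radius (Suc i)}" by blast
  have others: "indicator {radius (Suc (Suc i'))..<radius (Suc i')} v = (0::ennreal)"
    if "i' \<noteq> i" for i'
  proof (cases "i' < i")
    case True
    then have "radius (Suc i) \<le> radius (Suc (Suc i'))" by (intro radius_antimono) auto
    then show ?thesis using i by auto
  next
    case False
    then have "radius (Suc i') \<le> radius (Suc (Suc i))" using that by (intro radius_antimono) auto
    then show ?thesis using i by auto
  qed
  have "(\<Sum>i'\<le>K. ennreal (r (net_size (Suc i'))) * indicator {radius (Suc (Suc i'))..<radius (Suc i')} v)
      = ennreal (r (net_size (Suc i)))"
    using i others by (subst sum.remove[of _ i]) (auto intro!: sum.neutral)
  moreover have "indicator {0<..<radius (Suc (Suc K))} v = (0::ennreal)"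
    using i radius_antimono[of "Suc (Suc i)" "Suc (Suc K)"] by auto
  moreover have "indicator {0<..<radius 1} v = (1::ennreal)"
    using i radius_pos[of "Suc (Suc i)"] radius_antimono[of 1 "Suc i"] by auto
  moreover have "ennreal (r (net_size (Suc i))) \<le> r_covering r T d v"
    using i net_size_ge_1[of "Suc i"] covering_number_radius[of "Suc i"]
      covering_number_antimono[of v "radius (Suc i)" T d]
    by (intro r_covering_ge[OF r_mono]) auto
  ultimately show ?thesis by simp
next
  case False
  then have "(\<Sum>i\<le>K. ennreal (r (net_size (Suc i))) * indicator {radius (Suc (Suc i))..<radius (Suc i)} v) = 0"
    by (intro sum.neutral) auto
  moreover have "ennreal (r 1) \<le> r_covering r T d v"
    using r_covering_ge[OF r_mono, of 1 T d v] covering_number_ge_1[OF T_ne, of d v]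
    by (simp add: one_enat_def)
  moreover have "v < radius (Suc (Suc K)) \<Longrightarrow> v < radius 1"
    using radius_antimono[of 1 "Suc (Suc K)"] by auto
  ultimately show ?thesis by (auto split: split_indicator)
qed

lemma I_r_ge_riemann_sum:
  "ennreal ((\<Sum>i\<le>K. (radius (Suc i) - radius (Suc (Suc i))) * r (net_size (Suc i)))
      + radius (Suc (Suc K)) * r 1)
     \<le> I_r r T d (radius 1)"
proof -
  have gap: "0 \<le> radius (Suc i) - radius (Suc (Suc i))" for i
    using radius_antimono[of "Suc i" "Suc (Suc i)"] by simp
  have "ennreal ((\<Sum>i\<le>K. (radius (Suc i) - radius (Suc (Suc i))) * r (net_size (Suc i)))
      + radius (Suc (Suc K)) * r 1)
    = (\<Sum>i\<le>K. ennreal (r (net_size (Suc i))) * emeasure lborel {radius (Suc (Suc i))..<radius (Suc i)})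
      + ennreal (r 1) * emeasure lborel {0<..<radius (Suc (Suc K))}"
  proof -
    have "ennreal ((\<Sum>i\<le>K. (radius (Suc i) - radius (Suc (Suc i))) * r (net_size (Suc i)))
        + radius (Suc (Suc K)) * r 1)
      = (\<Sum>i\<le>K. ennreal ((radius (Suc i) - radius (Suc (Suc i))) * r (net_size (Suc i))))
        + ennreal (radius (Suc (Suc K)) * r 1)"
      using gap radius_pos[of "Suc (Suc K)"] r_net_size_nonneg r_nonneg
      by (subst ennreal_plus) (auto intro!: sum_nonneg)
    then show ?thesis
      using gap radius_pos[of "Suc (Suc K)"] r_net_size_nonneg r_nonneg
      by (simp only:) (intro arg_cong2[where f="(+)"] sum.cong; simp add: ennreal_mult'' mult.commute)
  qed
  also have "\<dots> = (\<integral>\<^sup>+v. (\<Sum>i\<le>K. ennreal (r (net_size (Suc i)))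
        * indicator {radius (Suc (Suc i))..<radius (Suc i)} v)
      + ennreal (r 1) * indicator {0<..<radius (Suc (Suc K))} v \<partial>lborel)"
  proof -
    let ?f = "\<lambda>v. \<Sum>i\<le>K. ennreal (r (net_size (Suc i))) * indicator {radius (Suc (Suc i))..<radius (Suc i)} v"
    let ?g = "\<lambda>v. ennreal (r 1) * indicator {0<..<radius (Suc (Suc K))} v"
    have "?f \<in> borel_measurable lborel" by measurable
    moreover have "?g \<in> borel_measurable lborel" by measurable
    ultimately
    have "(\<integral>\<^sup>+v. ?f v + ?g v \<partial>lborel) = (\<integral>\<^sup>+v. ?f v \<partial>lborel) + (\<integral>\<^sup>+v. ?g v \<partial>lborel)"
      by (rule nn_integral_add)
    also have "(\<integral>\<^sup>+v. ?f v \<partial>lborel) = (\<Sum>i\<le>K. \<integral>\<^sup>+v. ennreal (r (net_size (Suc i)))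
        * indicator {radius (Suc (Suc i))..<radius (Suc i)} v \<partial>lborel)"
      by (rule nn_integral_sum) measurable
    finally show ?thesis
      by (simp add: nn_integral_cmult_indicator)
  qed
  also have "\<dots> \<le> I_r r T d (radius 1)"
    unfolding I_r_eq by (rule nn_integral_mono) (rule step_function_le_r_covering)
  finally show ?thesis .
qed

definition weight :: "nat \<Rightarrow> nat \<Rightarrow> real" where
  "weight K i = (if i \<le> K then (1 - \<theta>) * \<theta> ^ i else \<theta> ^ Suc K)"

lemma weight_pos: "0 < weight K i"
  unfolding weight_def using theta_pos theta_less_1 by simp

lemma sum_weight: "(\<Sum>i\<le>Suc K. weight K i) = 1"
  using sum_geometric_weights[of \<theta> K] by (simp add: weight_def)

lemma r_exp_weighted_log_net_size_le:
  "r (exp (\<Sum>i\<le>K. weight K i * ln (net_size (Suc i))))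
     \<le> (\<Sum>i\<le>K. weight K i * r (net_size (Suc i))) + \<theta> ^ Suc K * r 1"
proof -
  define y where "y i = (if i \<le> K then ln (real (net_size (Suc i))) else 0)" for i
  have "r (exp (\<Sum>i\<le>Suc K. weight K i *\<^sub>R y i)) \<le> (\<Sum>i\<le>Suc K. weight K i * r (exp (y i)))"
  proof (rule convex_on_sum[OF _ _ r_exp_convex sum_weight])
    show "0 \<le> weight K i" for i using weight_pos[of K i] by simp
    show "y i \<in> {0..}" for i using net_size_ge_1[of "Suc i"] by (simp add: y_def)
  qed auto
  moreover have "(\<Sum>i\<le>Suc K. weight K i *\<^sub>R y i) = (\<Sum>i\<le>K. weight K i * ln (net_size (Suc i)))"
    by (simp add: y_def)
  moreover have "exp (y i) = real (net_size (Suc i))" if "i \<le> K" for i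
    using that net_size_ge_1[of "Suc i"] by (simp add: y_def)
  then have "(\<Sum>i\<le>K. weight K i * r (exp (y i))) = (\<Sum>i\<le>K. weight K i * r (net_size (Suc i)))"
    by simp
  moreover have "weight K (Suc K) = \<theta> ^ Suc K"
    by (simp add: weight_def)
  ultimately show ?thesis
    by (simp add: y_def)
qed

lemma exp_weighted_log_net_size_le_gen_inv:
  "ennreal (exp (\<Sum>i\<le>K. weight K i * ln (net_size (Suc i))))
     \<le> gen_inv r (enn2real (I_r r T d (\<theta> * m)) / (\<theta> * m))"
proof (rule gen_inv_ge)
  show "1 \<le> exp (\<Sum>i\<le>K. weight K i * ln (net_size (Suc i)))"
    using weight_pos net_size_ge_1 by (simp add: less_imp_le sum_nonneg)
  define Q where "Q = (\<Sum>i\<le>K. weight K i * r (net_size (Suc i))) + \<theta> ^ Suc K * r 1"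
  have \<theta>m: "\<theta> * m > 0" using theta_pos m_pos by simp
  have Q_nonneg: "0 \<le> Q"
    unfolding Q_def using weight_pos r_net_size_nonneg r_nonneg theta_pos
    by (intro add_nonneg_nonneg sum_nonneg mult_nonneg_nonneg) (auto simp: less_imp_le)
  have "(\<Sum>i\<le>K. (radius (Suc i) - radius (Suc (Suc i))) * r (net_size (Suc i)))
      + radius (Suc (Suc K)) * r 1 = (\<theta> * m) * Q"
    unfolding Q_def radius_def weight_def by (simp add: sum_distrib_left algebra_simps)
  then have "ennreal ((\<theta> * m) * Q) \<le> I_r r T d (\<theta> * m)"
    using I_r_ge_riemann_sum[of K] by (simp add: radius_def)
  moreover have "I_r r T d (\<theta> * m) < \<infinity>"
    using I_r_mono[of "\<theta> * m" m r T d] I_r_finite theta_less_1 m_pos by simp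
  ultimately have "(\<theta> * m) * Q \<le> enn2real (I_r r T d (\<theta> * m))"
    using Q_nonneg \<theta>m enn2real_mono[of "ennreal ((\<theta> * m) * Q)"] by simp
  then have "Q \<le> enn2real (I_r r T d (\<theta> * m)) / (\<theta> * m)"
    using \<theta>m by (simp add: field_simps)
  then show "r (exp (\<Sum>i\<le>K. weight K i * ln (net_size (Suc i))))
      \<le> enn2real (I_r r T d (\<theta> * m)) / (\<theta> * m)"
    using r_exp_weighted_log_net_size_le[of K] unfolding Q_def by linarith
qed

definition net :: "nat \<Rightarrow> 't set" where
  "net j = (SOME C. C \<subseteq> T \<and> finite C \<and> T \<subseteq> (\<Union>c\<in>C. {s\<in>T. d c s < radius j}) \<and> card C = net_size j)"

lemma net:
  assumes "1 \<le> j"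
  shows "net j \<subseteq> T" "finite (net j)" "T \<subseteq> (\<Union>c\<in>net j. {s\<in>T. d c s < radius j})"
    "card (net j) = net_size j"
proof -
  obtain C where "C \<subseteq> T" "finite C" "T \<subseteq> (\<Union>c\<in>C. {s\<in>T. d c s < radius j})" "card C = net_size j"
    using covering_number_attained[OF covering_number_radius[OF assms]] .
  then have "\<exists>C. C \<subseteq> T \<and> finite C \<and> T \<subseteq> (\<Union>c\<in>C. {s\<in>T. d c s < radius j}) \<and> card C = net_size j"
    by (intro exI[of _ C]) simp
  then have "net j \<subseteq> T \<and> finite (net j) \<and> T \<subseteq> (\<Union>c\<in>net j. {s\<in>T. d c s < radius j})
      \<and> card (net j) = net_size j"
    unfolding net_def by (rule someI_ex)
  then show "net j \<subseteq> T" "finite (net j)" "T \<subseteq> (\<Union>c\<in>net j. {s\<in>T. d c s < radius j})"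
    "card (net j) = net_size j"
    by auto
qed

lemma net_nonempty: "1 \<le> j \<Longrightarrow> net j \<noteq> {}"
  using net(4)[of j] net_size_ge_1[of j] by auto

definition proj :: "nat \<Rightarrow> 't \<Rightarrow> 't" where
  "proj j u = (SOME c. c \<in> net j \<and> d c u < radius j)"

lemma proj:
  assumes "1 \<le> j" "u \<in> T"
  shows "proj j u \<in> net j" "d (proj j u) u < radius j"
proof -
  have "\<exists>c. c \<in> net j \<and> d c u < radius j" using net(3)[OF assms(1)] assms(2) by blast
  then have "proj j u \<in> net j \<and> d (proj j u) u < radius j" unfolding proj_def by (rule someI_ex)
  then show "proj j u \<in> net j" "d (proj j u) u < radius j" by auto
qed

lemma compose_from_proj_in_net: "1 \<le> j \<Longrightarrow> t \<in> T \<Longrightarrow> compose_from proj j k t \<in> net j"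
proof (induction k arbitrary: j)
  case 0
  then show ?case using proj by simp
next
  case (Suc k)
  then have "compose_from proj (Suc j) k t \<in> T" using net(1)[of "Suc j"] by auto
  then show ?case using proj Suc.prems by simp
qed

text \<open>The Gaussian families used for chaining a finite \<open>F \<subseteq> T\<close> through the nets of levels
  \<open>1, \<dots>, K+1\<close>: level \<open>0\<close> is the coarsest net itself, level \<open>1 \<le> i \<le> K\<close> the links from
  \<open>net (i+1)\<close> to \<open>net i\<close>, and level \<open>K+1\<close> the links from \<open>F\<close> to \<open>net (K+1)\<close>.\<close>
definition increments :: "'t set \<Rightarrow> nat \<Rightarrow> nat \<Rightarrow> ('a \<Rightarrow> real) set" where
  "increments F K i = (if i = 0 then X ` net 1
     else if i \<le> K then (\<lambda>u \<omega>. X (proj i u) \<omega> - X u \<omega>) ` net (Suc i)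
     else (\<lambda>s \<omega>. X (proj (Suc K) s) \<omega> - X s \<omega>) ` F)"

lemma increments_finite_nonempty:
  "finite F \<Longrightarrow> F \<noteq> {} \<Longrightarrow> finite (increments F K i) \<and> increments F K i \<noteq> {}"
  using net(2) net_nonempty by (auto simp: increments_def)

lemma card_increments_le: "i \<le> K \<Longrightarrow> card (increments F K i) \<le> net_size (Suc i)"
  using net(2,4)[of "Suc i"] net(2,4)[of 1]
  by (auto simp: increments_def intro: card_image_le order_trans)

lemma card_increments_last_le: "finite F \<Longrightarrow> card (increments F K (Suc K)) \<le> card F"
  by (auto simp: increments_def intro: card_image_le)

lemma abs_X_le_sum_Max_increments:
  assumes "F \<subseteq> T" "finite F" "s \<in> F"
  shows "\<bar>X s \<omega>\<bar> \<le> (\<Sum>i\<le>Suc K. Max ((\<lambda>Y. \<bar>Y \<omega>\<bar>) ` increments F K i))"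
proof -
  define pt where "pt j = compose_from proj j (Suc K - j) s" for j
  define Z where "Z i = Max ((\<lambda>Y. \<bar>Y \<omega>\<bar>) ` increments F K i)" for i
  have pt_net: "1 \<le> j \<Longrightarrow> pt j \<in> net j" for j
    unfolding pt_def using compose_from_proj_in_net assms by auto
  have pt_step: "pt j = proj j (pt (Suc j))" if "1 \<le> j" "j \<le> K" for j
  proof -
    from that have "Suc K - j = Suc (K - j)" "Suc K - Suc j = K - j" by auto
    then show ?thesis unfolding pt_def by simp
  qed
  have Z_ge: "Y \<in> increments F K i \<Longrightarrow> \<bar>Y \<omega>\<bar> \<le> Z i" for Y i
    unfolding Z_def using increments_finite_nonempty[of F K i] assms by (intro Max_ge) auto
  have first: "\<bar>X (pt 1) \<omega>\<bar> \<le> Z 0"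
    using pt_net[of 1] by (intro Z_ge) (auto simp: increments_def)
  have middle: "\<bar>X (pt i) \<omega> - X (pt (Suc i)) \<omega>\<bar> \<le> Z i" if "i \<in> {1..K}" for i
  proof -
    have "(\<lambda>\<omega>. X (proj i (pt (Suc i))) \<omega> - X (pt (Suc i)) \<omega>) \<in> increments F K i"
      using that pt_net[of "Suc i"] by (auto simp: increments_def)
    from Z_ge[OF this] show ?thesis using that pt_step[of i] by simp
  qed
  have last: "\<bar>X (pt (Suc K)) \<omega> - X s \<omega>\<bar> \<le> Z (Suc K)"
    using assms(3) by (intro Z_ge) (auto simp: increments_def pt_def)
  have "X s \<omega> = X (pt 1) \<omega> - (\<Sum>i=1..K. X (pt i) \<omega> - X (pt (Suc i)) \<omega>)
      - (X (pt (Suc K)) \<omega> - X s \<omega>)"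
    using sum_Suc_diff[of 1 K "\<lambda>i. - X (pt i) \<omega>"] by simp
  then have "\<bar>X s \<omega>\<bar> \<le> \<bar>X (pt 1) \<omega>\<bar> + (\<Sum>i=1..K. \<bar>X (pt i) \<omega> - X (pt (Suc i)) \<omega>\<bar>)
      + \<bar>X (pt (Suc K)) \<omega> - X s \<omega>\<bar>"
    using sum_abs[of "\<lambda>i. X (pt i) \<omega> - X (pt (Suc i)) \<omega>" "{1..K}"] by linarith
  also have "\<dots> \<le> Z 0 + (\<Sum>i=1..K. Z i) + Z (Suc K)"
  proof -
    have "(\<Sum>i=1..K. \<bar>X (pt i) \<omega> - X (pt (Suc i)) \<omega>\<bar>) \<le> (\<Sum>i=1..K. Z i)"
      by (rule sum_mono) (rule middle)
    then show ?thesis using first last by linarith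
  qed
  also have "\<dots> = (\<Sum>i\<le>Suc K. Z i)"
  proof -
    have "{..K} = insert 0 {1..K}" by auto
    then show ?thesis by simp
  qed
  finally show ?thesis unfolding Z_def .
qed

lemma increments_gaussian:
  assumes "F \<subseteq> T" "i \<le> Suc K" "Y \<in> increments F K i"
  shows "centered_gaussian_rv M Y \<and> (\<integral>\<omega>. (Y \<omega>)\<^sup>2 \<partial>M) \<le> (weight K i * (m / (1 - \<theta>)))\<^sup>2"
proof -
  have \<theta>: "0 < 1 - \<theta>" using theta_less_1 by simp
  consider "i = 0" | "1 \<le> i" "i \<le> K" | "i = Suc K" using assms(2) by linarith
  then show ?thesis
  proof cases
    case 1
    then obtain u where u: "u \<in> net 1" "Y = X u" using assms(3) by (auto simp: increments_def)
    have "u \<in> T" using u net(1)[of 1] by auto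
    moreover have "weight K i * (m / (1 - \<theta>)) = m" using 1 \<theta> by (simp add: weight_def)
    ultimately show ?thesis using centered_gaussian_X second_moment_le u by simp
  next
    case 2
    then obtain u where u: "u \<in> net (Suc i)" "Y = (\<lambda>\<omega>. X (proj i u) \<omega> - X u \<omega>)"
      using assms(3) by (auto simp: increments_def)
    have "u \<in> T" using u net(1)[of "Suc i"] by auto
    moreover have "proj i u \<in> T" using proj(1)[OF 2(1) \<open>u \<in> T\<close>] net(1)[OF 2(1)] by auto
    moreover have "weight K i * (m / (1 - \<theta>)) = radius i" using 2 \<theta> by (simp add: weight_def radius_def)
    ultimately show ?thesis
      using centered_gaussian_X_diff second_moment_diff_le[OF proj(2)[OF 2(1) \<open>u \<in> T\<close>]] u by simp
  next
    case 3
    then obtain u where u: "u \<in> F" "Y = (\<lambda>\<omega>. X (proj (Suc K) u) \<omega> - X u \<omega>)"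
      using assms(3) by (auto simp: increments_def)
    have "u \<in> T" using u assms(1) by auto
    have "proj (Suc K) u \<in> T" using proj(1)[OF _ \<open>u \<in> T\<close>, of "Suc K"] net(1)[of "Suc K"] by auto
    have "radius (Suc K) \<le> weight K i * (m / (1 - \<theta>))"
      using 3 \<theta> theta_pos m_pos mult_left_mono[of m "m / (1 - \<theta>)" "\<theta> ^ Suc K"]
      by (simp add: weight_def radius_def field_simps)
    moreover have "(\<integral>\<omega>. (Y \<omega>)\<^sup>2 \<partial>M) \<le> (radius (Suc K))\<^sup>2"
      using second_moment_diff_le[OF proj(2)[OF _ \<open>u \<in> T\<close>, of "Suc K"]] u by simp
    moreover have "(radius (Suc K))\<^sup>2 \<le> (weight K i * (m / (1 - \<theta>)))\<^sup>2"
      using \<open>radius (Suc K) \<le> _\<close> radius_pos[of "Suc K"] by (intro power_mono) auto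
    ultimately have "(\<integral>\<omega>. (Y \<omega>)\<^sup>2 \<partial>M) \<le> (weight K i * (m / (1 - \<theta>)))\<^sup>2"
      by linarith
    then show ?thesis
      using centered_gaussian_X_diff[OF \<open>proj (Suc K) u \<in> T\<close> \<open>u \<in> T\<close>] u by simp
  qed
qed

lemma nn_integral_SUP_finite_le_chaining:
  assumes F: "F \<subseteq> T" "finite F" "F \<noteq> {}" and lam: "lam \<ge> 0"
  shows "(\<integral>\<^sup>+\<omega>. (SUP s\<in>F. ennreal (exp (lam * \<bar>X s \<omega>\<bar>))) \<partial>M)
     \<le> ennreal (2 * exp (lam\<^sup>2 * (m / (1 - \<theta>))\<^sup>2 / 2)
          * exp ((\<Sum>i\<le>K. weight K i * ln (net_size (Suc i))) + \<theta> ^ Suc K * ln (card F)))"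
proof -
  have card_pos: "i \<le> Suc K \<Longrightarrow> 0 < real (card (increments F K i))" for i
    using increments_finite_nonempty[OF F(2,3), of K i] by (simp add: card_gt_0_iff)
  have "(\<integral>\<^sup>+\<omega>. (SUP s\<in>F. ennreal (exp (lam * \<bar>X s \<omega>\<bar>))) \<partial>M)
     \<le> ennreal (2 * exp (lam\<^sup>2 * (m / (1 - \<theta>))\<^sup>2 / 2)
          * exp (\<Sum>i\<le>Suc K. weight K i * ln (card (increments F K i))))"
  proof (rule nn_integral_exp_sum_Max_gaussians_le[OF prob _ _ weight_pos sum_weight _ _ lam])
    show "finite (increments F K i) \<and> increments F K i \<noteq> {}" for i
      using increments_finite_nonempty F by blast
    show "centered_gaussian_rv M Y \<and> (\<integral>\<omega>. (Y \<omega>)\<^sup>2 \<partial>M) \<le> (weight K i * (m / (1 - \<theta>)))\<^sup>2"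
      if "i \<in> {..Suc K}" "Y \<in> increments F K i" for i Y
      using increments_gaussian F that by auto
    show "(SUP s\<in>F. ennreal (exp (lam * \<bar>X s \<omega>\<bar>)))
        \<le> ennreal (exp (lam * (\<Sum>i\<le>Suc K. Max ((\<lambda>Y. \<bar>Y \<omega>\<bar>) ` increments F K i))))" for \<omega>
      using abs_X_le_sum_Max_increments[OF F(1,2)] lam
      by (intro SUP_least ennreal_leI) (simp add: mult_left_mono)
  qed auto
  also have "\<dots> \<le> ennreal (2 * exp (lam\<^sup>2 * (m / (1 - \<theta>))\<^sup>2 / 2)
          * exp ((\<Sum>i\<le>K. weight K i * ln (net_size (Suc i))) + \<theta> ^ Suc K * ln (card F)))"
  proof -
    have "weight K i * ln (card (increments F K i)) \<le> weight K i * ln (net_size (Suc i))"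
      if "i \<le> K" for i
      using that card_pos[of i] card_increments_le[of i K F] weight_pos[of K i]
      by (intro mult_left_mono) auto
    moreover have "\<theta> ^ Suc K * ln (card (increments F K (Suc K))) \<le> \<theta> ^ Suc K * ln (card F)"
      using card_pos[of "Suc K"] card_increments_last_le[OF F(2), of K] theta_pos
      by (intro mult_left_mono) auto
    ultimately have "(\<Sum>i\<le>K. weight K i * ln (card (increments F K i)))
        + weight K (Suc K) * ln (card (increments F K (Suc K)))
        \<le> (\<Sum>i\<le>K. weight K i * ln (net_size (Suc i))) + \<theta> ^ Suc K * ln (card F)"
      unfolding weight_def[of K "Suc K"] by (intro add_mono sum_mono) auto
    then have "(\<Sum>i\<le>Suc K. weight K i * ln (card (increments F K i)))
        \<le> (\<Sum>i\<le>K. weight K i * ln (net_size (Suc i))) + \<theta> ^ Suc K * ln (card F)"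
      by simp
    then show ?thesis by (intro ennreal_leI mult_left_mono) auto
  qed
  finally show ?thesis .
qed

text \<open>Letting \<open>K \<rightarrow> \<infinity>\<close> removes the contribution \<open>\<theta>^(K+1) ln |F|\<close> of the last level.\<close>
lemma nn_integral_SUP_finite_le:
  assumes F: "F \<subseteq> T" "finite F" "F \<noteq> {}" and lam: "lam \<ge> 0"
  shows "(\<integral>\<^sup>+\<omega>. (SUP s\<in>F. ennreal (exp (lam * \<bar>X s \<omega>\<bar>))) \<partial>M)
     \<le> 2 * ennreal (exp (lam\<^sup>2 * m\<^sup>2 / (2 * (1 - \<theta>)\<^sup>2)))
         * gen_inv r (enn2real (I_r r T d (\<theta> * m)) / (\<theta> * m))"
    (is "_ \<le> ?B")
proof -
  define c where "c K = exp (\<theta> ^ Suc K * ln (card F))" for K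
  have "(\<integral>\<^sup>+\<omega>. (SUP s\<in>F. ennreal (exp (lam * \<bar>X s \<omega>\<bar>))) \<partial>M) \<le> ?B * ennreal (c K)" for K
  proof -
    have "lam\<^sup>2 * (m / (1 - \<theta>))\<^sup>2 / 2 = lam\<^sup>2 * m\<^sup>2 / (2 * (1 - \<theta>)\<^sup>2)"
      by (simp add: power_divide)
    then have "(\<integral>\<^sup>+\<omega>. (SUP s\<in>F. ennreal (exp (lam * \<bar>X s \<omega>\<bar>))) \<partial>M)
        \<le> 2 * ennreal (exp (lam\<^sup>2 * m\<^sup>2 / (2 * (1 - \<theta>)\<^sup>2)))
          * ennreal (exp (\<Sum>i\<le>K. weight K i * ln (net_size (Suc i)))) * ennreal (c K)"
      using nn_integral_SUP_finite_le_chaining[OF F lam, of K]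
      by (simp add: c_def exp_add ennreal_mult mult_ac)
    also have "\<dots> \<le> ?B * ennreal (c K)"
      by (intro mult_right_mono mult_left_mono exp_weighted_log_net_size_le_gen_inv) auto
    finally show ?thesis .
  qed
  moreover have "(\<lambda>K. ?B * ennreal (c K)) \<longlonglongrightarrow> ?B * ennreal (exp (0 * ln (card F)))"
    unfolding c_def using theta_pos theta_less_1
    by (intro tendsto_intros LIMSEQ_power_zero[THEN LIMSEQ_Suc]) auto
  ultimately show ?thesis
    using LIMSEQ_le_const[of "\<lambda>K. ?B * ennreal (c K)"] by fastforce
qed

lemma nn_integral_SUP_exp_le:
  assumes "lam > 0"
  shows "(\<integral>\<^sup>+\<omega>. (SUP t\<in>T. ennreal (exp (lam * \<bar>X t \<omega>\<bar>))) \<partial>completion M)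
     \<le> 2 * ennreal (exp (lam\<^sup>2 * m\<^sup>2 / (2 * (1 - \<theta>)\<^sup>2)))
         * gen_inv r (enn2real (I_r r T d (\<theta> * m)) / (\<theta> * m))"
    (is "_ \<le> ?B")
proof -
  have cont: "isCont (\<lambda>x. ennreal (exp (lam * \<bar>x\<bar>))) x" for x
    by (intro continuous_intros)
  obtain S where S: "S \<subseteq> T" "countable S" "S \<noteq> {}"
    and AE: "AE \<omega> in M. (SUP t\<in>T. ennreal (exp (lam * \<bar>X t \<omega>\<bar>)))
      = (SUP t\<in>S. ennreal (exp (lam * \<bar>X t \<omega>\<bar>)))"
    using separable_process_AE_SUP_eq[OF separable T_ne cont] by blast
  have "(\<integral>\<^sup>+\<omega>. (SUP t\<in>T. ennreal (exp (lam * \<bar>X t \<omega>\<bar>))) \<partial>completion M)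
      = (\<integral>\<^sup>+\<omega>. (SUP t\<in>S. ennreal (exp (lam * \<bar>X t \<omega>\<bar>))) \<partial>M)"
    using AE by (simp add: nn_integral_completion nn_integral_cong_AE)
  also have "\<dots> \<le> ?B"
  proof (rule nn_integral_SUP_countable_le[OF S(2,3)])
    show "(\<lambda>\<omega>. ennreal (exp (lam * \<bar>X t \<omega>\<bar>))) \<in> borel_measurable M" if "t \<in> S" for t
    proof -
      have [measurable]: "X t \<in> borel_measurable M"
        using that S(1) centered_gaussian_X centered_gaussian_rv_measurable by blast
      show ?thesis by measurable
    qed
    show "(\<integral>\<^sup>+\<omega>. (SUP t\<in>F. ennreal (exp (lam * \<bar>X t \<omega>\<bar>))) \<partial>M) \<le> ?B"
      if "finite F" "F \<noteq> {}" "F \<subseteq> S" for F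
      using nn_integral_SUP_finite_le that S(1) assms by auto
  qed
  finally show ?thesis .
qed

lemma emeasure_SUP_ge_le:
  assumes "\<mu> > 0"
  shows "emeasure (completion M) {\<omega>\<in>space M. (SUP t\<in>T. ereal \<bar>X t \<omega>\<bar>) \<ge> ereal \<mu>}
     \<le> 2 * ennreal (exp (- (\<mu>\<^sup>2 * (1 - \<theta>)\<^sup>2 / (2 * m\<^sup>2))))
         * gen_inv r (enn2real (I_r r T d (\<theta> * m)) / (\<theta> * m))"
    (is "?P \<le> 2 * ennreal (exp ?c) * ?G")
proof -
  \<comment> \<open>Chernoff: the choice of \<open>lam\<close> minimises \<open>lam\<^sup>2 m\<^sup>2 / (2 (1 - \<theta>)\<^sup>2) - lam \<mu>\<close>.\<close>
  define lam where "lam = \<mu> * (1 - \<theta>)\<^sup>2 / m\<^sup>2"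
  have lam: "lam > 0" unfolding lam_def using assms theta_less_1 m_pos by simp
  have exponent: "lam\<^sup>2 * m\<^sup>2 / (2 * (1 - \<theta>)\<^sup>2) = lam * \<mu> + ?c"
  proof -
    have "(\<mu> * q\<^sup>2 / n\<^sup>2)\<^sup>2 * n\<^sup>2 / (2 * q\<^sup>2) = \<mu> * q\<^sup>2 / n\<^sup>2 * \<mu> - \<mu>\<^sup>2 * q\<^sup>2 / (2 * n\<^sup>2)"
      if "q > 0" "n > 0" for q n :: real
      using that by (simp add: field_simps power2_eq_square)
    then show ?thesis
      unfolding lam_def using m_pos theta_less_1 by simp
  qed
  have "ennreal (exp (lam * \<mu>)) * ?P
      \<le> (\<integral>\<^sup>+\<omega>. (SUP t\<in>T. ennreal (exp (lam * \<bar>X t \<omega>\<bar>))) \<partial>completion M)"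
    using emeasure_SUP_ge_le_nn_integral_exp[OF lam, where \<mu>=\<mu> and N="completion M" and T=T and f=X] by simp
  also have "\<dots> \<le> 2 * ennreal (exp (lam\<^sup>2 * m\<^sup>2 / (2 * (1 - \<theta>)\<^sup>2))) * ?G"
    by (rule nn_integral_SUP_exp_le[OF lam])
  also have "\<dots> = ennreal (exp (lam * \<mu>)) * (2 * ennreal (exp ?c) * ?G)"
    unfolding exponent exp_add by (simp add: ennreal_mult mult_ac)
  finally show ?thesis
    by (subst (asm) ennreal_mult_le_mult_iff) auto
qed

end

theorem theorem1:
  fixes M :: "'a measure" and T :: "'t set" and X :: "'t \<Rightarrow> 'a \<Rightarrow> real"
    and r :: "real \<Rightarrow> real"
  assumes "prob_space M"
    and "T \<noteq> {}"
    and "centered_gaussian_process M T X"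
    and "bdd_above ((\<lambda>t. sqrt (\<integral>\<omega>. (X t \<omega>)\<^sup>2 \<partial>M)) ` T)"
    and "m_T M T X > 0"
    and "separable_pm T (rho_X M X)"
    and "separable_process M T (rho_X M X) X"
    and "\<forall>u\<ge>1. r u \<ge> 0"
    and "mono_on {1..} r"
    and "convex_on {0..} (\<lambda>y. r (exp y))"
    and "I_r r T (rho_X M X) (m_T M T X) < \<infinity>"
  shows "(\<forall>\<theta>\<in>{0<..<1}. \<forall>lam>0.
            (\<integral>\<^sup>+ \<omega>. (SUP t\<in>T. ennreal (exp (lam * \<bar>X t \<omega>\<bar>))) \<partial>completion M)
            \<le> 2 * ennreal (exp (lam\<^sup>2 * (m_T M T X)\<^sup>2 / (2 * (1 - \<theta>)\<^sup>2)))
                * gen_inv r (enn2real (I_r r T (rho_X M X) (\<theta> * m_T M T X)) / (\<theta> * m_T M T X)))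
       \<and> (\<forall>\<theta>\<in>{0<..<1}. \<forall>\<mu>>0.
            emeasure (completion M) {\<omega>\<in>space M. (SUP t\<in>T. ereal \<bar>X t \<omega>\<bar>) \<ge> ereal \<mu>}
            \<le> 2 * ennreal (exp (- (\<mu>\<^sup>2 * (1 - \<theta>)\<^sup>2 / (2 * (m_T M T X)\<^sup>2))))
                * gen_inv r (enn2real (I_r r T (rho_X M X) (\<theta> * m_T M T X)) / (\<theta> * m_T M T X)))"
proof -
  have chaining: "gaussian_chaining M T X r \<theta>" if "\<theta> \<in> {0<..<1}" for \<theta>
    unfolding gaussian_chaining_def using assms that by auto
  show ?thesis
    using gaussian_chaining.nn_integral_SUP_exp_le[OF chaining]
      gaussian_chaining.emeasure_SUP_ge_le[OF chaining]
    by blast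
qed

end
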